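(* Let $\psi$ satisfy $0<c_\psi\le\psi(X_i,Y_j)\le C_\psi$ for all $i,j$. Then for each $i$ the cell problem has a unique solution $\chi(X_i,\cdot)\in U^p_\#(\mathbb Z)$. Moreover $\chi(X_{i+N},Y_j)=\chi(X_i,Y_j)$ for all $i,j$, i.e. $\chi\in U^N_{\rm per}(\epsilon\mathbb Z)\otimes U^p_\#(\mathbb Z)$.
   Context: Let $\epsilon>0$ and $N,p$ positive integers; $X_i=\epsilon i$, $Y_j=j$. $U^p_\#(\mathbb Z)$ is the space of $p$-periodic functions $s:\mathbb Z\to\mathbb R$ with $\sum_{j=1}^ps(Y_j)=0$. $\psi:\epsilon\mathbb Z\times\mathbb Z\to\mathbb R$ satisfies $\psi(X_{i+N},Y_j)=\psi(X_i,Y_j)=\psi(X_i,Y_{j+p})$. For a function $g$ of $(X_i,Y_j)$, $D_Yg(X_i,Y_j)=g(X_i,Y_{j+1})-g(X_i,Y_j)$. The cell problem at $X_i$: find a $p$-periodic function $\chi(X_i,\cdot)$ on $\mathbb Z$ with $\frac1p\sum_{j=1}^p\chi(X_i,Y_j)=0$ and $-D_Y(\psi D_Y\chi)(X_i,Y_j)=D_Y\psi(X_i,Y_j)$ for all $j\in\mathbb Z$. *)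

theory Defs
  imports Complex_Main
begin

text \<open>Forward difference in the fast variable: D_Y g (Y_j) = g(Y_{j+1}) - g(Y_j), with Y_j = j.\<close>
definition DY :: "(int \<Rightarrow> real) \<Rightarrow> int \<Rightarrow> real" where
  "DY g j = g (j + 1) - g j"

definition U_sharp :: "nat \<Rightarrow> (int \<Rightarrow> real) set" where
  "U_sharp p = {s. (\<forall>j. s (j + int p) = s j) \<and> (\<Sum>j=1..int p. s j) = 0}"

definition cell_solution ::
  "real \<Rightarrow> nat \<Rightarrow> (real \<Rightarrow> int \<Rightarrow> real) \<Rightarrow> int \<Rightarrow> (int \<Rightarrow> real) \<Rightarrow> bool" where
  "cell_solution eps p psi i c \<longleftrightarrow>
     (\<forall>j. c (j + int p) = c j) \<and>
     (1 / real p) * (\<Sum>j=1..int p. c j) = 0 \<and>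
     (\<forall>j. - DY (\<lambda>k. psi (eps * of_int i) k * DY c k) j = DY (psi (eps * of_int i)) j)"

end

theory Submission
  imports Defs
begin

text \<open>The cell equation says that the flux \<open>a (D_Y \<chi> + 1)\<close> is constant in \<open>j\<close>.
  Summing \<open>D_Y \<chi> = K / a - 1\<close> over a period, where \<open>D_Y \<chi>\<close> telescopes to zero, forces
  \<open>K\<close> to be the harmonic mean of \<open>a\<close>; so \<open>D_Y \<chi>\<close> is determined, and the mean-zero
  condition fixes the additive constant. Conversely the periodic antidifference of
  \<open>K / a - 1\<close> with mean zero is a solution. Since the coefficient at \<open>X_{i+N}\<close> equals
  the one at \<open>X_i\<close>, uniqueness gives periodicity in \<open>i\<close>.\<close>

definition cell_equation :: "(int \<Rightarrow> real) \<Rightarrow> (int \<Rightarrow> real) \<Rightarrow> bool" where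
  "cell_equation a c \<longleftrightarrow> (\<forall>j. - DY (\<lambda>k. a k * DY c k) j = DY a j)"

definition harmonic_mean :: "nat \<Rightarrow> (int \<Rightarrow> real) \<Rightarrow> real" where
  "harmonic_mean p a = real p / (\<Sum>j=1..int p. 1 / a j)"

lemma DY_eq_0_imp_const:
  assumes "\<And>j. DY g j = 0"
  shows "g j = g 0"
proof (induction j rule: int_induct[where k=0])
  case (step1 i) then show ?case using assms[of i] by (simp add: DY_def)
next
  case (step2 i) then show ?case using assms[of "i - 1"] by (simp add: DY_def)
qed simp

lemma periodic_add_mult:
  assumes "\<And>j. f (j + int p) = f j"
  shows "f (x + int p * m) = f x"
proof (induction m rule: int_induct[where k=0])
  case (step1 m) then show ?case using assms[of "x + int p * m"] by (simp add: algebra_simps)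
next
  case (step2 m) then show ?case using assms[of "x + int p * (m - 1)"] by (simp add: algebra_simps)
qed simp

lemma periodic_mod:
  assumes "\<And>j. f (j + int p) = f j"
  shows "f (j mod int p) = f j"
  using periodic_add_mult[where f=f, OF assms, of "j mod int p" "j div int p"]
  by (simp add: mod_mult_div_eq)

lemma sum_period_eq_sum_lessThan:
  fixes f :: "int \<Rightarrow> 'a::cancel_comm_monoid_add"
  assumes "\<And>j. f (j + int p) = f j"
  shows "(\<Sum>j=1..int p. f j) = (\<Sum>k<p. f (int k))"
proof -
  have "{1..int p} = int ` {1..p}" by (simp add: image_int_atLeastAtMost)
  then have "(\<Sum>j=1..int p. f j) = (\<Sum>k=1..p. f (int k))"
    by (simp add: sum.reindex)
  also have "\<dots> = (\<Sum>k<p. f (int (Suc k)))"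
    by (simp add: sum.atLeast1_atMost_eq)
  also have "\<dots> = (\<Sum>k<p. f (int k))"
  proof -
    have "(\<Sum>k<Suc p. f (int k)) = f 0 + (\<Sum>k<p. f (int (Suc k)))"
      using sum.lessThan_Suc_shift[of "\<lambda>k. f (int k)" p] by simp
    moreover have "(\<Sum>k<Suc p. f (int k)) = (\<Sum>k<p. f (int k)) + f 0"
      using assms[of 0] by simp
    ultimately show ?thesis by (metis add.commute add_left_cancel)
  qed
  finally show ?thesis .
qed

lemma sum_period_DY:
  assumes "\<And>j. c (j + int p) = (c j :: real)"
  shows "(\<Sum>j=1..int p. DY c j) = 0"
proof -
  have "DY c (j + int p) = DY c j" for j
    using assms[of j] assms[of "j + 1"] by (simp add: DY_def algebra_simps)
  then have "(\<Sum>j=1..int p. DY c j) = (\<Sum>k<p. c (int (Suc k)) - c (int k))"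
    using sum_period_eq_sum_lessThan[of "DY c" p] by (simp add: DY_def add.commute)
  also have "\<dots> = c (int p) - c 0"
    using sum_lessThan_telescope[of "\<lambda>k. c (int k)" p] by simp
  finally show ?thesis using assms[of 0] by simp
qed

lemma exists_periodic_antidifference:
  fixes d :: "int \<Rightarrow> real"
  assumes p: "p > 0" and d_per: "\<And>j. d (j + int p) = d j"
    and d_sum: "(\<Sum>j=1..int p. d j) = 0"
  shows "\<exists>F. (\<forall>j. F (j + int p) = F j) \<and> (\<forall>j. DY F j = d j)"
proof -
  define F where "F j = (\<Sum>k<nat (j mod int p). d (int k))" for j
  have "DY F j = d j" for j
  proof -
    define r where "r = j mod int p"
    have r: "0 \<le> r" "r < int p" using p by (auto simp: r_def)
    have next_mod: "(j + 1) mod int p = (r + 1) mod int p"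
      by (simp add: r_def mod_add_left_eq)
    have "d r = d j" unfolding r_def by (rule periodic_mod[of d, OF d_per])
    show ?thesis
    proof (cases "r + 1 < int p")
      case True
      then have "nat ((j + 1) mod int p) = Suc (nat r)" using next_mod r by simp
      then show ?thesis using \<open>d r = d j\<close> r by (simp add: DY_def F_def r_def)
    next
      case False
      then have r_last: "r = int (p - 1)" "p = Suc (p - 1)" using r p by auto
      have "F (j + 1) = 0" using next_mod r_last by (simp add: F_def)
      moreover have "nat r = p - 1" using r_last(1) by (metis nat_int)
      then have "F j = (\<Sum>k<p - 1. d (int k))" by (simp add: F_def flip: r_def)
      moreover have "(\<Sum>k<p. d (int k)) = 0"
        using d_sum sum_period_eq_sum_lessThan[of d, OF d_per] by simp
      ultimately have "F (j + 1) - F j = d r"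
        using r_last sum.lessThan_Suc[of "\<lambda>k. d (int k)" "p - 1"] by simp
      then show ?thesis using \<open>d r = d j\<close> by (simp add: DY_def)
    qed
  qed
  moreover have "F (j + int p) = F j" for j by (simp add: F_def)
  ultimately show ?thesis by blast
qed

lemma U_sharp_eq_if_DY_eq:
  assumes p: "p > 0" and c1: "c1 \<in> U_sharp p" and c2: "c2 \<in> U_sharp p"
    and DY_eq: "\<And>j. DY c1 j = DY c2 j"
  shows "c1 = c2"
proof -
  define e where "e j = c1 j - c2 j" for j
  have "DY e j = 0" for j using DY_eq[of j] by (simp add: DY_def e_def)
  then have e_const: "e j = e 0" for j by (rule DY_eq_0_imp_const)
  have "(\<Sum>j=1..int p. e j) = 0"
    using c1 c2 by (simp add: U_sharp_def e_def sum_subtractf)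
  moreover have "(\<Sum>j=1..int p. e j) = (\<Sum>j=1..int p. e 0)"
    by (rule sum.cong[OF refl e_const])
  ultimately have "e 0 = 0" using p by simp
  then have "c1 j = c2 j" for j using e_const[of j] by (simp add: e_def)
  then show ?thesis by blast
qed

lemma cell_equation_iff_constant_flux:
  "cell_equation a c \<longleftrightarrow> (\<exists>K. \<forall>j. a j * (DY c j + 1) = K)"
proof -
  define flux where "flux k = a k * (DY c k + 1)" for k
  have "(- DY (\<lambda>k. a k * DY c k) j = DY a j) \<longleftrightarrow> DY flux j = 0" for j
    unfolding flux_def DY_def by (simp add: ring_distribs) linarith
  then have "cell_equation a c \<longleftrightarrow> (\<forall>j. DY flux j = 0)"
    by (simp add: cell_equation_def)
  also have "\<dots> \<longleftrightarrow> (\<exists>K. \<forall>j. flux j = K)"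
  proof
    assume "\<forall>j. DY flux j = 0"
    then have "flux j = flux 0" for j by (intro DY_eq_0_imp_const) simp
    then show "\<exists>K. \<forall>j. flux j = K" by blast
  qed (auto simp: DY_def)
  finally show ?thesis by (simp add: flux_def)
qed

lemma DY_of_cell_equation:
  assumes p: "p > 0" and a_pos: "\<And>j. a j > 0" and c_per: "\<And>j. c (j + int p) = c j"
    and sol: "cell_equation a c"
  shows "DY c j = harmonic_mean p a / a j - 1"
proof -
  obtain K where K: "\<And>j. a j * (DY c j + 1) = K"
    using sol cell_equation_iff_constant_flux by blast
  have DY_c: "DY c j = K * (1 / a j) - 1" for j
    using K[of j] a_pos[of j] by (simp add: field_simps)
  have "0 = (\<Sum>j=1..int p. DY c j)" using sum_period_DY[of c, OF c_per] by simp
  also have "\<dots> = K * (\<Sum>j=1..int p. 1 / a j) - real p"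
    by (simp add: DY_c sum_subtractf sum_distrib_left)
  finally have "K = harmonic_mean p a"
    using sum_pos[of "{1..int p}" "\<lambda>j. 1 / a j"] p a_pos
    by (simp add: harmonic_mean_def field_simps)
  then show ?thesis using DY_c[of j] by simp
qed

lemma cell_equation_exists:
  assumes p: "p > 0" and a_pos: "\<And>j. a j > 0" and a_per: "\<And>j. a (j + int p) = a j"
  shows "\<exists>c. c \<in> U_sharp p \<and> cell_equation a c"
proof -
  define K where "K = harmonic_mean p a"
  define d where "d j = K / a j - 1" for j
  have "(\<Sum>j=1..int p. d j) = K * (\<Sum>j=1..int p. 1 / a j) - real p"
    by (simp add: d_def sum_subtractf sum_distrib_left)
  also have "\<dots> = 0"
    using sum_pos[of "{1..int p}" "\<lambda>j. 1 / a j"] p a_pos by (simp add: K_def harmonic_mean_def)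
  finally obtain F where F_per: "\<And>j. F (j + int p) = F j" and DY_F: "\<And>j. DY F j = d j"
    using exists_periodic_antidifference[OF p, of d] a_per by (auto simp: d_def)
  define c where "c j = F j - (\<Sum>k=1..int p. F k) / real p" for j
  have "c \<in> U_sharp p"
    using p F_per by (simp add: U_sharp_def c_def sum_subtractf)
  moreover have "a j * (DY c j + 1) = K" for j
    using DY_F[of j] a_pos[of j] by (simp add: DY_def c_def d_def field_simps)
  then have "cell_equation a c" using cell_equation_iff_constant_flux by blast
  ultimately show ?thesis by blast
qed

lemma cell_equation_unique_solution:
  assumes p: "p > 0" and a_pos: "\<And>j. a j > 0" and a_per: "\<And>j. a (j + int p) = a j"
  shows "\<exists>!c. c \<in> U_sharp p \<and> cell_equation a c"
proof -
  have "c1 = c2" if c1: "c1 \<in> U_sharp p" "cell_equation a c1"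
    and c2: "c2 \<in> U_sharp p" "cell_equation a c2" for c1 c2
  proof (rule U_sharp_eq_if_DY_eq[OF p c1(1) c2(1)])
    fix j
    have per1: "\<And>k. c1 (k + int p) = c1 k" and per2: "\<And>k. c2 (k + int p) = c2 k"
      using c1(1) c2(1) by (simp_all add: U_sharp_def)
    show "DY c1 j = DY c2 j"
      using DY_of_cell_equation[of p a c1 j, OF p a_pos per1 c1(2)]
        DY_of_cell_equation[of p a c2 j, OF p a_pos per2 c2(2)] by (rule trans[OF _ sym])
  qed
  then show ?thesis using cell_equation_exists[of p a, OF p a_pos a_per] by blast
qed

lemma cell_solution_iff_cell_equation:
  "c \<in> U_sharp p \<Longrightarrow>
    cell_solution eps p psi i c \<longleftrightarrow> cell_equation (psi (eps * of_int i)) c"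
  by (simp add: cell_solution_def cell_equation_def U_sharp_def)

theorem proposition4p2:
  fixes eps :: real and N p :: nat and psi :: "real \<Rightarrow> int \<Rightarrow> real"
    and c_psi C_psi :: real
  assumes eps: "eps > 0" and N: "N > 0" and p: "p > 0"
    and per_X: "\<And>i j. psi (eps * of_int (i + int N)) j = psi (eps * of_int i) j"
    and per_Y: "\<And>i j. psi (eps * of_int i) (j + int p) = psi (eps * of_int i) j"
    and c_pos: "0 < c_psi"
    and lower: "\<And>i j. c_psi \<le> psi (eps * of_int i) j"
    and upper: "\<And>i j. psi (eps * of_int i) j \<le> C_psi"
  shows "(\<forall>i. \<exists>!c. c \<in> U_sharp p \<and> cell_solution eps p psi i c) \<and>
         (\<forall>chi :: int \<Rightarrow> int \<Rightarrow> real.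
            (\<forall>i. chi i \<in> U_sharp p \<and> cell_solution eps p psi i (chi i)) \<longrightarrow>
            (\<forall>i j. chi (i + int N) j = chi i j))"
proof -
  have unique: "\<exists>!c. c \<in> U_sharp p \<and> cell_equation (psi (eps * of_int i)) c" for i
    by (rule cell_equation_unique_solution[OF p])
      (use per_Y lower c_pos in \<open>auto intro: less_le_trans\<close>)
  then have unique_cell_solution: "\<exists>!c. c \<in> U_sharp p \<and> cell_solution eps p psi i c" for i
    by (simp add: cell_solution_iff_cell_equation cong: conj_cong)
  have "chi (i + int N) = chi i"
    if chi: "\<forall>i. chi i \<in> U_sharp p \<and> cell_solution eps p psi i (chi i)"
    for chi :: "int \<Rightarrow> int \<Rightarrow> real" and i
  proof -
    have "psi (eps * of_int (i + int N)) = psi (eps * of_int i)" using per_X by (rule ext)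
    then have "cell_solution eps p psi i (chi (i + int N))"
      using chi by (metis cell_solution_iff_cell_equation)
    then show ?thesis using chi unique_cell_solution[of i] by blast
  qed
  then show ?thesis using unique_cell_solution by simp
qed

end
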